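(* Let $G$ satisfy the standing assumptions and assume additionally that there exists $\epsilon>0$ with $\lim_{z\to\infty} z^{2+\epsilon}\dot G(z)=0$. Then the function $$H:(0,\infty)\to\mathbb{R},\qquad H(A):=\frac{\int_0^A\frac{s\dot G(s)}{(A-s)^{1/p}}\,ds}{\int_0^A\frac{\dot G(s)}{(A-s)^{1/p}}\,ds}$$ is continuous and bounded on $(0,\infty)$, and satisfies $$\lim_{A\to0}H(A)=0,\qquad \lim_{A\to\infty}H(A)=\frac{2}{c_p(G)}\int_0^\infty s\dot G(s)\,ds.$$
   Context: Fix $p\in(1,\infty)$. Standing assumptions on $G$: $G \in C^\infty(\mathbb{R})$ is odd, $\dot G>0$, and $s\mapsto s\dot G(s)$ belongs to $L^1(\mathbb{R})$. $c_p(G):=2\lim_{s\to\infty}G(s)$. *)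

theory Defs
  imports "HOL-Analysis.Analysis"
begin

definition smooth_real :: "(real \<Rightarrow> real) \<Rightarrow> bool" where
  "smooth_real G \<longleftrightarrow> (\<forall>n x. ((deriv ^^ n) G) differentiable (at x))"

definition standing_G :: "(real \<Rightarrow> real) \<Rightarrow> bool" where
  "standing_G G \<longleftrightarrow> smooth_real G \<and> (\<forall>s. G (- s) = - G s) \<and> (\<forall>s. deriv G s > 0)
     \<and> integrable lborel (\<lambda>s. s * deriv G s)"

definition c_p :: "(real \<Rightarrow> real) \<Rightarrow> real" where
  "c_p G = 2 * Lim at_top G"

definition H_fun :: "real \<Rightarrow> (real \<Rightarrow> real) \<Rightarrow> real \<Rightarrow> real" where
  "H_fun p G A =
     (LBINT s:{0..A}. s * deriv G s / (A - s) powr (1 / p)) /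
     (LBINT s:{0..A}. deriv G s / (A - s) powr (1 / p))"

end

theory Submission
  imports Defs "HOL-Real_Asymp.Real_Asymp"
begin

text \<open>
  With q = 1/p, the substitution s = A - A u turns int_0^A f(s) (A - s)^(-q) ds into
  A^(1 - q) int_0^1 f(A - A u) u^(-q) du, whose integrand depends continuously on A and is
  dominated by a multiple of the integrable weight u^(-q); this gives continuity of H, and
  0 <= H(A) <= A gives the limit at 0.
  For A -> oo, A^q int_0^A f(s) (A - s)^(-q) ds tends to int_0^oo f whenever f >= 0 is
  integrable and s f(s) -> 0: on [0, A/2] by dominated convergence, since (A/(A - s))^q <= 2^q,
  while the integral over (A/2, A] is at most 2/(1 - q) sup {t f(t) | t >= A/2}. Applied to
  f = G' and to f = s G' (this is where s^2 G'(s) -> 0 is needed), H(A) tends to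
  int_0^oo s G' / int_0^oo G', and int_0^oo G' = lim G = c_p(G)/2. Boundedness follows since
  H is continuous with finite limits at both ends of (0, oo).
\<close>

definition abel_integral :: "(real \<Rightarrow> real) \<Rightarrow> real \<Rightarrow> real \<Rightarrow> real" where
  "abel_integral f q A = (LBINT s:{0..A}. f s / (A - s) powr q)"

lemma set_integral_mono_subset_nonneg:
  fixes f :: "'a \<Rightarrow> real"
  assumes "set_integrable M B f" "A \<subseteq> B" "A \<in> sets M" "\<And>x. x \<in> B \<Longrightarrow> 0 \<le> f x"
  shows "(LINT x:A|M. f x) \<le> (LINT x:B|M. f x)"
  unfolding set_lebesgue_integral_def
proof (rule integral_mono)
  show "integrable M (\<lambda>x. indicator A x *\<^sub>R f x)"
    using set_integrable_subset[OF assms(1) assms(3) assms(2)] unfolding set_integrable_def .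
  show "integrable M (\<lambda>x. indicator B x *\<^sub>R f x)"
    using assms(1) unfolding set_integrable_def .
  show "indicator A x *\<^sub>R f x \<le> indicator B x *\<^sub>R f x" for x
    using assms(2,4) by (auto simp: indicator_def)
qed

lemma
  fixes q :: real assumes "q < 1"
  shows set_integrable_inverse_powr_unit: "set_integrable lborel {0..1} (\<lambda>u::real. 1 / u powr q)"
    and set_integral_inverse_powr_unit: "(LBINT u:{0..1::real}. 1 / u powr q) = 1 / (1 - q)"
proof -
  have hi: "((\<lambda>u::real. u powr (-q)) has_integral 1 / (1 - q)) {0..1}"
    using has_integral_powr_from_0[of "-q" 1] assms by simp
  then have "(\<lambda>u::real. u powr (-q)) absolutely_integrable_on {0..1}"
    by (intro nonnegative_absolutely_integrable_1) (auto simp: has_integral_integrable)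
  then have si: "set_integrable lborel {0..1} (\<lambda>u::real. u powr (-q))"
    unfolding set_integrable_def by (subst (asm) integrable_completion) auto
  then show "set_integrable lborel {0..1} (\<lambda>u::real. 1 / u powr q)"
    by (simp add: powr_minus_divide)
  have "(LBINT u:{0..1::real}. u powr (-q)) = 1 / (1 - q)"
    using set_borel_integral_eq_integral(2)[OF si] integral_unique[OF hi] by simp
  then show "(LBINT u:{0..1::real}. 1 / u powr q) = 1 / (1 - q)"
    by (simp add: powr_minus_divide)
qed

lemma set_integrable_div_powr_unit:
  fixes h :: "real \<Rightarrow> real"
  assumes "q < 1" "continuous_on {0..1} h"
  shows "set_integrable lborel {0..1} (\<lambda>u. h u / u powr q)"
proof -
  obtain B where B: "\<And>u. u \<in> {0..1} \<Longrightarrow> norm (h u) \<le> B"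
    using compact_imp_bounded[OF compact_continuous_image[OF assms(2)]]
    by (meson bounded_iff imageI compact_Icc)
  have "(\<lambda>u. indicator {0..1::real} u *\<^sub>R h u) \<in> borel_measurable borel"
    by (rule borel_measurable_continuous_on_indicator[OF _ assms(2)]) simp
  then have "(\<lambda>u. (indicator {0..1::real} u *\<^sub>R h u) / u powr q) \<in> borel_measurable borel"
    by measurable
  then have meas: "set_borel_measurable lborel {0..1} (\<lambda>u. h u / u powr q)"
    unfolding set_borel_measurable_def by (simp add: indicator_def cong: if_cong)
  have "norm (h u / u powr q) \<le> norm (B * (1 / u powr q))" if "u \<in> {0..1}" for u
  proof -
    have "\<bar>h u\<bar> \<le> B" using B[OF that] by simp
    then show ?thesis by (simp add: abs_mult divide_right_mono)
  qed
  then show ?thesis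
    using set_integrable_mult_right[OF set_integrable_inverse_powr_unit[OF assms(1)], of B]
    by (intro set_integrable_bound[OF _ meas] AE_I2) auto
qed

lemma
  fixes f :: "real \<Rightarrow> real"
  assumes A: "0 < A" and q: "q < 1" and fc: "continuous_on UNIV f"
  shows set_integrable_abel_kernel: "set_integrable lborel {0..A} (\<lambda>s. f s / (A - s) powr q)"
    and abel_integral_rescale:
      "abel_integral f q A = A powr (1 - q) * (LBINT u:{0..1}. f (A - A*u) / u powr q)"
proof -
  have "continuous_on {0..1} (\<lambda>u. f (A - A*u))"
    by (rule continuous_on_compose2[OF fc]) (auto intro!: continuous_intros)
  then have J: "integrable lborel (\<lambda>u. indicator {0..1} u *\<^sub>R (f (A - A*u) / u powr q))"
    using set_integrable_div_powr_unit[OF q] unfolding set_integrable_def by blast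
  have affine: "indicator {0..A} (A + (-A) * u) *\<^sub>R (f (A + (-A)*u) / (A - (A + (-A)*u)) powr q)
      = A powr (-q) * (indicator {0..1} u *\<^sub>R (f (A - A*u) / u powr q))" for u :: real
  proof -
    have "indicator {0..A} (A - A * u) = (indicator {0..1} u :: real)"
      using A by (auto simp: indicator_def mult_le_cancel_left1 zero_le_mult_iff)
    moreover have "(A - (A + (-A)*u)) powr q = A powr q * u powr q"
      by (simp add: powr_mult)
    ultimately show ?thesis using A by (simp add: powr_minus_divide)
  qed
  show "set_integrable lborel {0..A} (\<lambda>s. f s / (A - s) powr q)"
    unfolding set_integrable_def
    apply (subst lborel_integrable_real_affine_iff[where c="-A" and t=A, symmetric])
    using A integrable_mult_right[OF J] by (simp_all only: affine)
  have "abel_integral f q A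
      = \<bar>-A\<bar> *\<^sub>R (LBINT u. A powr (-q) * (indicator {0..1} u *\<^sub>R (f (A - A*u) / u powr q)))"
    unfolding abel_integral_def set_lebesgue_integral_def
    apply (subst lborel_integral_real_affine[where c="-A" and t=A])
    using A by (simp_all only: affine)
  also have "\<dots> = A * A powr (-q) * (LBINT u:{0..1}. f (A - A*u) / u powr q)"
    using A unfolding set_lebesgue_integral_def integral_mult_right_zero by simp
  also have "A * A powr (-q) = A powr (1 - q)"
    using A by (simp add: powr_diff powr_minus_divide)
  finally show "abel_integral f q A = A powr (1 - q) * (LBINT u:{0..1}. f (A - A*u) / u powr q)" .
qed

lemma abel_integral_const:
  assumes "0 < A" "q < 1"
  shows "abel_integral (\<lambda>_. c) q A = c * A powr (1 - q) / (1 - q)"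
proof -
  have "(LBINT u:{0..1}. c * (1 / u powr q)) = c * (LBINT u:{0..1}. 1 / u powr q)"
    by (rule set_integral_mult_right)
  then show ?thesis
    using abel_integral_rescale[OF assms, of "\<lambda>_. c"] set_integral_inverse_powr_unit[OF assms(2)]
    by simp
qed

lemma abel_integral_pos:
  fixes f :: "real \<Rightarrow> real"
  assumes q: "0 \<le> q" "q < 1" and A: "0 < A" and fc: "continuous_on UNIV f"
    and fpos: "\<And>s. s \<in> {0..A} \<Longrightarrow> 0 < f s"
  shows "0 < abel_integral f q A"
proof -
  obtain m where m: "0 < m" "\<And>s. s \<in> {0..A} \<Longrightarrow> m \<le> f s"
  proof -
    have "continuous_on {0..A} f" using continuous_on_subset[OF fc] by blast
    then obtain s0 where "s0 \<in> {0..A}" "\<forall>s\<in>{0..A}. f s0 \<le> f s"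
      using continuous_attains_inf[of "{0..A}" f] A by auto
    then show thesis using that fpos by blast
  qed
  have kernel_ge: "m / A powr q \<le> f s / (A - s) powr q" if "s \<in> {0..A}" "s \<noteq> A" for s
  proof (rule frac_le)
    show "0 \<le> f s" "m \<le> f s" using that m fpos[of s] by auto
    show "0 < (A - s) powr q" using that by simp
    show "(A - s) powr q \<le> A powr q" using that q by (intro powr_mono2) auto
  qed
  have "0 < m / A powr q * A"
    using m A by simp
  also have "\<dots> = (LBINT s:{0..A}. m / A powr q)"
    using A by (subst set_integral_const) (auto simp: measure_lborel_Icc)
  also have "\<dots> \<le> abel_integral f q A"
    unfolding abel_integral_def
  proof (rule set_integral_mono_AE)
    show "set_integrable lborel {0..A} (\<lambda>s. m / A powr q)"
      by (rule borel_integrable_atLeastAtMost') simp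
    show "set_integrable lborel {0..A} (\<lambda>s. f s / (A - s) powr q)"
      by (rule set_integrable_abel_kernel[OF A q(2) fc])
    show "AE s\<in>{0..A} in lborel. m / A powr q \<le> f s / (A - s) powr q"
      using AE_lborel_singleton[of A] by eventually_elim (use kernel_ge in blast)
  qed
  finally show ?thesis .
qed

lemma abel_integral_moment_bounds:
  fixes f :: "real \<Rightarrow> real"
  assumes A: "0 < A" and q: "q < 1" and fc: "continuous_on UNIV f"
    and fnn: "\<And>s. s \<in> {0..A} \<Longrightarrow> 0 \<le> f s"
  shows "0 \<le> abel_integral (\<lambda>s. s * f s) q A"
    and "abel_integral (\<lambda>s. s * f s) q A \<le> A * abel_integral f q A"
proof -
  show "0 \<le> abel_integral (\<lambda>s. s * f s) q A"
    unfolding abel_integral_def set_lebesgue_integral_def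
    by (rule integral_nonneg_AE) (use fnn in \<open>auto simp: indicator_def\<close>)
  have "abel_integral (\<lambda>s. s * f s) q A \<le> (LBINT s:{0..A}. A * (f s / (A - s) powr q))"
    unfolding abel_integral_def
  proof (rule set_integral_mono)
    have "continuous_on UNIV (\<lambda>s. s * f s)" by (intro continuous_intros fc)
    then show "set_integrable lborel {0..A} (\<lambda>s. s * f s / (A - s) powr q)"
      by (rule set_integrable_abel_kernel[OF A q])
    show "set_integrable lborel {0..A} (\<lambda>s. A * (f s / (A - s) powr q))"
      using set_integrable_mult_right[OF set_integrable_abel_kernel[OF A q fc]] .
    show "s * f s / (A - s) powr q \<le> A * (f s / (A - s) powr q)" if "s \<in> {0..A}" for s
      using mult_right_mono[of s A "f s / (A - s) powr q"] that fnn by simp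
  qed
  also have "\<dots> = A * abel_integral f q A"
    unfolding abel_integral_def by (rule set_integral_mult_right)
  finally show "abel_integral (\<lambda>s. s * f s) q A \<le> A * abel_integral f q A" .
qed

lemma isCont_rescaled_abel_integral:
  fixes f :: "real \<Rightarrow> real"
  assumes q: "q < 1" and fc: "continuous_on UNIV f"
  shows "isCont (\<lambda>A. LBINT u:{0..1}. f (A - A*u) / u powr q) A0"
proof (rule continuous_at_sequentiallyI)
  have [measurable]: "f \<in> borel_measurable borel"
    by (rule borel_measurable_continuous_onI[OF fc])
  fix X :: "nat \<Rightarrow> real" assume X: "X \<longlonglongrightarrow> A0"
  obtain R where R: "\<And>n. norm (X n) \<le> R"
    using convergent_imp_Bseq[OF convergentI[OF X]] by (elim BseqE) blast
  have "compact (f ` {-R..R})"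
    by (intro compact_continuous_image continuous_on_subset[OF fc]) auto
  then obtain B where B: "\<And>s. s \<in> {-R..R} \<Longrightarrow> norm (f s) \<le> B"
    using compact_imp_bounded bounded_iff by (metis image_eqI)
  have range: "X n - X n * u \<in> {-R..R}" if "u \<in> {0..1}" for n u
  proof -
    have "X n - X n * u = X n * (1 - u)"
      by (simp add: algebra_simps)
    then have "\<bar>X n - X n * u\<bar> = \<bar>X n\<bar> * (1 - u)"
      using that by (simp add: abs_mult)
    also have "\<dots> \<le> \<bar>X n\<bar>"
      using that by (simp add: mult_left_le)
    finally show ?thesis using R[of n] by auto
  qed
  let ?F = "\<lambda>A u. indicator {0..1} u *\<^sub>R (f (A - A*u) / u powr q)"
  have "(\<lambda>n. integral\<^sup>L lborel (?F (X n))) \<longlonglongrightarrow> integral\<^sup>L lborel (?F A0)"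
  proof (rule integral_dominated_convergence[where w="\<lambda>u. indicator {0..1} u *\<^sub>R (B * (1 / u powr q))"])
    show "integrable lborel (\<lambda>u. indicator {0..1} u *\<^sub>R (B * (1 / u powr q)))"
      using set_integrable_mult_right[OF set_integrable_inverse_powr_unit[OF q], of B]
      unfolding set_integrable_def by simp
    show "?F A0 \<in> borel_measurable lborel"
      by measurable
    show "?F (X n) \<in> borel_measurable lborel" for n
      by measurable
    show "AE u in lborel. (\<lambda>n. ?F (X n) u) \<longlonglongrightarrow> ?F A0 u"
    proof (intro AE_I2)
      fix u :: real
      have "(\<lambda>n. X n - X n * u) \<longlonglongrightarrow> A0 - A0 * u"
        by (intro tendsto_intros X)
      then have "(\<lambda>n. f (X n - X n * u)) \<longlonglongrightarrow> f (A0 - A0 * u)"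
        by (rule isCont_tendsto_compose[rotated]) (use fc continuous_on_eq_continuous_at in auto)
      then show "(\<lambda>n. ?F (X n) u) \<longlonglongrightarrow> ?F A0 u"
        using tendsto_scaleR[OF tendsto_const tendsto_mult_right[of _ _ _ "1 / u powr q"]] by simp
    qed
    show "AE u in lborel. norm (?F (X n) u) \<le> indicator {0..1} u *\<^sub>R (B * (1 / u powr q))" for n
    proof (intro AE_I2)
      fix u :: real
      show "norm (?F (X n) u) \<le> indicator {0..1} u *\<^sub>R (B * (1 / u powr q))"
      proof (cases "u \<in> {0..1}")
        case True
        then have "norm (f (X n - X n * u)) \<le> B" using B range by blast
        then show ?thesis using True by (simp add: divide_right_mono)
      qed simp
    qed
  qed
  then show "(\<lambda>n. LBINT u:{0..1}. f (X n - X n*u) / u powr q) \<longlonglongrightarrow> (LBINT u:{0..1}. f (A0 - A0*u) / u powr q)"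
    unfolding set_lebesgue_integral_def .
qed

lemma continuous_on_abel_integral:
  fixes f :: "real \<Rightarrow> real"
  assumes "q < 1" "continuous_on UNIV f"
  shows "continuous_on {0<..} (abel_integral f q)"
proof -
  have "continuous_on {0<..} (\<lambda>A::real. A powr (1 - q))"
    by (intro continuous_intros) auto
  moreover have "continuous_on {0<..} (\<lambda>A. LBINT u:{0..1}. f (A - A*u) / u powr q)"
    by (intro continuous_at_imp_continuous_on ballI isCont_rescaled_abel_integral[OF assms])
  ultimately have "continuous_on {0<..} (\<lambda>A. A powr (1 - q) * (LBINT u:{0..1}. f (A - A*u) / u powr q))"
    by (rule continuous_on_mult)
  then show ?thesis
    by (rule continuous_on_eq) (simp add: abel_integral_rescale[OF _ assms])
qed

lemma tendsto_abel_integral_head: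
  fixes f :: "real \<Rightarrow> real"
  assumes q: "0 \<le> q" and f[measurable]: "f \<in> borel_measurable borel"
    and fnn: "\<And>s. 0 \<le> s \<Longrightarrow> 0 \<le> f s" and fi: "set_integrable lborel {0..} f"
  shows "((\<lambda>A. LBINT s:{0..A/2}. A powr q * (f s / (A - s) powr q)) \<longlongrightarrow> (LBINT s:{0..}. f s)) at_top"
  unfolding set_lebesgue_integral_def
proof (rule integral_dominated_convergence_at_top[where w="\<lambda>s. 2 powr q * (indicator {0..} s *\<^sub>R f s)"])
  have kernel: "A powr q * (f s / (A - s) powr q) = f s * (A / (A - s)) powr q"
    if "0 \<le> s" "s \<le> A / 2" for A s
    using that by (simp add: powr_divide)
  show "(\<lambda>s. indicator {0..} s *\<^sub>R f s) \<in> borel_measurable lborel"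
    by measurable
  show "(\<lambda>s. indicator {0..A/2} s *\<^sub>R (A powr q * (f s / (A - s) powr q))) \<in> borel_measurable lborel" for A
    by measurable
  show "integrable lborel (\<lambda>s. 2 powr q * (indicator {0..} s *\<^sub>R f s))"
    using fi unfolding set_integrable_def by simp
  show "AE s in lborel. ((\<lambda>A. indicator {0..A/2} s *\<^sub>R (A powr q * (f s / (A - s) powr q)))
      \<longlongrightarrow> indicator {0..} s *\<^sub>R f s) at_top"
  proof (intro AE_I2)
    fix s :: real
    show "((\<lambda>A. indicator {0..A/2} s *\<^sub>R (A powr q * (f s / (A - s) powr q)))
      \<longlongrightarrow> indicator {0..} s *\<^sub>R f s) at_top"
    proof (cases "0 \<le> s")
      case True
      have "((\<lambda>A. A / (A - s)) \<longlongrightarrow> 1) at_top"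
        by real_asymp
      then have "((\<lambda>A. f s * (A / (A - s)) powr q) \<longlongrightarrow> f s * 1 powr q) at_top"
        by (intro tendsto_intros) auto
      moreover have "\<forall>\<^sub>F A in at_top. f s * (A / (A - s)) powr q
          = indicator {0..A/2} s *\<^sub>R (A powr q * (f s / (A - s) powr q))"
        using eventually_ge_at_top[of "2 * s"] by eventually_elim (use True kernel in auto)
      ultimately show ?thesis
        using True by (simp add: Lim_transform_eventually)
    qed (simp add: indicator_def)
  qed
  have dominated: "norm (indicator {0..A/2} s *\<^sub>R (A powr q * (f s / (A - s) powr q)))
      \<le> 2 powr q * (indicator {0..} s *\<^sub>R f s)" if A: "0 < A" for A s
  proof (cases "s \<in> {0..A/2}")
    case True
    then have "A / (A - s) \<le> 2" using A by (simp add: field_simps)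
    then have "(A / (A - s)) powr q \<le> 2 powr q"
      using True A q by (intro powr_mono2) auto
    then have "f s * (A / (A - s)) powr q \<le> f s * 2 powr q"
      using True fnn by (intro mult_left_mono) auto
    then show ?thesis using True fnn[of s] A by (simp add: powr_divide mult.commute)
  qed (use fnn in \<open>auto simp: indicator_def\<close>)
  show "\<forall>\<^sub>F A in at_top. AE s in lborel. norm (indicator {0..A/2} s *\<^sub>R (A powr q * (f s / (A - s) powr q)))
      \<le> 2 powr q * (indicator {0..} s *\<^sub>R f s)"
    using eventually_gt_at_top[of 0] by eventually_elim (blast intro: AE_I2 dominated)
qed

lemma abel_integral_tail_le:
  fixes f :: "real \<Rightarrow> real"
  assumes q: "q < 1" and A: "0 < A" and fc: "continuous_on UNIV f"
    and bound: "\<And>s. s \<in> {A/2<..A} \<Longrightarrow> 0 \<le> f s \<and> s * f s \<le> B"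
  shows "(LBINT s:{A/2<..A}. A powr q * (f s / (A - s) powr q)) \<le> 2 * B / (1 - q)"
proof -
  define c where "c = 2 * B / A"
  have "0 \<le> f A" "A * f A \<le> B"
    using bound[of A] A by auto
  then have B: "0 \<le> B"
    using A by (meson mult_nonneg_nonneg less_imp_le order_trans)
  then have c: "0 \<le> c"
    unfolding c_def using A by simp
  have f_le: "f s \<le> c" if "s \<in> {A/2<..A}" for s
  proof -
    have "s * f s \<le> B" "0 < s" using bound[OF that] that A by auto
    then have "f s \<le> B / s" by (simp add: field_simps)
    also have "\<dots> \<le> c"
    proof -
      have "A * B \<le> (2 * s) * B" using that B by (intro mult_right_mono) auto
      then show ?thesis unfolding c_def using that A by (simp add: field_simps)
    qed
    finally show ?thesis .
  qed
  have int_f: "set_integrable lborel {0..A} (\<lambda>s. A powr q * (f s / (A - s) powr q))"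
    using set_integrable_mult_right[OF set_integrable_abel_kernel[OF A q fc]] .
  have int_c: "set_integrable lborel {0..A} (\<lambda>s. A powr q * (c / (A - s) powr q))"
    using set_integrable_mult_right[OF set_integrable_abel_kernel[OF A q, of "\<lambda>_. c"]] by simp
  have "(LBINT s:{A/2<..A}. A powr q * (f s / (A - s) powr q))
      \<le> (LBINT s:{A/2<..A}. A powr q * (c / (A - s) powr q))"
  proof (rule set_integral_mono)
    show "set_integrable lborel {A/2<..A} (\<lambda>s. A powr q * (f s / (A - s) powr q))"
      by (rule set_integrable_subset[OF int_f]) auto
    show "set_integrable lborel {A/2<..A} (\<lambda>s. A powr q * (c / (A - s) powr q))"
      by (rule set_integrable_subset[OF int_c]) auto
    show "A powr q * (f s / (A - s) powr q) \<le> A powr q * (c / (A - s) powr q)"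
      if "s \<in> {A/2<..A}" for s
      using f_le[OF that] by (intro mult_left_mono divide_right_mono) auto
  qed
  also have "\<dots> \<le> (LBINT s:{0..A}. A powr q * (c / (A - s) powr q))"
    by (rule set_integral_mono_subset_nonneg[OF int_c]) (use A c in auto)
  also have "\<dots> = A powr q * abel_integral (\<lambda>_. c) q A"
    unfolding abel_integral_def by (rule set_integral_mult_right)
  also have "\<dots> = 2 * B / (1 - q)"
    using A by (simp add: abel_integral_const[OF A q] c_def powr_diff)
  finally show ?thesis .
qed

lemma tendsto_abel_integral_tail:
  fixes f :: "real \<Rightarrow> real"
  assumes q: "q < 1" and fc: "continuous_on UNIV f" and fnn: "\<And>s. 0 \<le> s \<Longrightarrow> 0 \<le> f s"
    and decay: "((\<lambda>s. s * f s) \<longlongrightarrow> 0) at_top"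
  shows "((\<lambda>A. LBINT s:{A/2<..A}. A powr q * (f s / (A - s) powr q)) \<longlongrightarrow> 0) at_top"
proof (rule tendstoI)
  fix e :: real assume e: "0 < e"
  define B where "B = e * (1 - q) / 4"
  have "B > 0" unfolding B_def using e q by simp
  then obtain S0 where S0: "\<And>s. S0 \<le> s \<Longrightarrow> \<bar>s * f s\<bar> < B"
    using tendstoD[OF decay] by (auto simp: eventually_at_top_linorder)
  show "\<forall>\<^sub>F A in at_top. dist (LBINT s:{A/2<..A}. A powr q * (f s / (A - s) powr q)) 0 < e"
    using eventually_ge_at_top[of "max (2 * S0) 1"]
  proof eventually_elim
    case (elim A)
    then have A: "0 < A" by simp
    have "0 \<le> (LBINT s:{A/2<..A}. A powr q * (f s / (A - s) powr q))"
      unfolding set_lebesgue_integral_def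
      by (rule integral_nonneg_AE) (use A fnn in \<open>auto simp: indicator_def\<close>)
    moreover have "(LBINT s:{A/2<..A}. A powr q * (f s / (A - s) powr q)) \<le> 2 * B / (1 - q)"
    proof (rule abel_integral_tail_le[OF q A fc])
      fix s assume "s \<in> {A/2<..A}"
      then have "0 \<le> s" "S0 \<le> s" using elim by auto
      then show "0 \<le> f s \<and> s * f s \<le> B"
        using fnn[of s] S0[of s] by (simp add: abs_less_iff less_imp_le)
    qed
    moreover have "2 * B / (1 - q) < e"
      unfolding B_def using e q by (simp add: field_simps)
    ultimately show ?case by simp
  qed
qed

lemma tendsto_scaled_abel_integral:
  fixes f :: "real \<Rightarrow> real"
  assumes q: "0 \<le> q" "q < 1" and fc: "continuous_on UNIV f"
    and fnn: "\<And>s. 0 \<le> s \<Longrightarrow> 0 \<le> f s" and fi: "set_integrable lborel {0..} f"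
    and decay: "((\<lambda>s. s * f s) \<longlongrightarrow> 0) at_top"
  shows "((\<lambda>A. A powr q * abel_integral f q A) \<longlongrightarrow> (LBINT s:{0..}. f s)) at_top"
proof -
  let ?k = "\<lambda>A s. A powr q * (f s / (A - s) powr q)"
  have split: "A powr q * abel_integral f q A = (LBINT s:{0..A/2}. ?k A s) + (LBINT s:{A/2<..A}. ?k A s)"
    if A: "0 < A" for A
  proof -
    have int: "set_integrable lborel {0..A} (?k A)"
      using set_integrable_mult_right[OF set_integrable_abel_kernel[OF A q(2) fc]] .
    have "A powr q * abel_integral f q A = (LBINT s:{0..A}. ?k A s)"
      unfolding abel_integral_def by (rule set_integral_mult_right[symmetric])
    also have "{0..A} = {0..A/2} \<union> {A/2<..A}"
      using A by auto
    also have "(LBINT s:{0..A/2} \<union> {A/2<..A}. ?k A s) = (LBINT s:{0..A/2}. ?k A s) + (LBINT s:{A/2<..A}. ?k A s)"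
      by (rule set_integral_Un; (rule set_integrable_subset[OF int])?) auto
    finally show ?thesis .
  qed
  have "((\<lambda>A. (LBINT s:{0..A/2}. ?k A s) + (LBINT s:{A/2<..A}. ?k A s)) \<longlongrightarrow> (LBINT s:{0..}. f s) + 0) at_top"
    using tendsto_abel_integral_head[OF q(1) borel_measurable_continuous_onI[OF fc] fnn fi]
      tendsto_abel_integral_tail[OF q(2) fc fnn decay]
    by (rule tendsto_add)
  moreover have "\<forall>\<^sub>F A in at_top.
      (LBINT s:{0..A/2}. ?k A s) + (LBINT s:{A/2<..A}. ?k A s) = A powr q * abel_integral f q A"
    using eventually_gt_at_top[of 0] by eventually_elim (simp add: split)
  ultimately show ?thesis
    by (simp add: Lim_transform_eventually)
qed

lemma tendsto_power_mult_zero_of_powr: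
  fixes g :: "real \<Rightarrow> real"
  assumes "real n \<le> b" "\<forall>\<^sub>F z in at_top. 0 \<le> g z" "((\<lambda>z. z powr b * g z) \<longlongrightarrow> 0) at_top"
  shows "((\<lambda>z. z ^ n * g z) \<longlongrightarrow> 0) at_top"
proof (rule tendsto_sandwich[OF _ _ tendsto_const assms(3)])
  show "\<forall>\<^sub>F z in at_top. 0 \<le> z ^ n * g z"
    using assms(2) eventually_ge_at_top[of 0] by eventually_elim simp
  show "\<forall>\<^sub>F z in at_top. z ^ n * g z \<le> z powr b * g z"
    using assms(2) eventually_ge_at_top[of 1]
  proof eventually_elim
    case (elim z)
    then have "z ^ n = z powr real n" by (simp add: powr_realpow)
    also have "\<dots> \<le> z powr b" using elim assms(1) by (intro powr_mono) auto
    finally show ?case using elim by (intro mult_right_mono) auto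
  qed
qed

lemma bounded_image_of_continuous_on_with_limits:
  fixes f :: "real \<Rightarrow> 'a::metric_space"
  assumes cont: "continuous_on {a<..} f"
    and lim_a: "(f \<longlongrightarrow> l) (at_right a)" and lim_top: "(f \<longlongrightarrow> m) at_top"
  shows "bounded (f ` {a<..})"
proof -
  obtain b where b: "a < b" "\<And>x. a < x \<Longrightarrow> x < b \<Longrightarrow> dist (f x) l < 1"
    using tendstoD[OF lim_a zero_less_one] by (auto simp: eventually_at_right_field)
  obtain R where R: "\<And>x. R \<le> x \<Longrightarrow> dist (f x) m < 1"
    using tendstoD[OF lim_top zero_less_one] by (auto simp: eventually_at_top_linorder)
  have "f x \<in> ball l 1 \<union> f ` {b..R} \<union> ball m 1" if "a < x" for x
  proof (cases "x < b")
    case True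
    then show ?thesis using b(2)[OF that] by (simp add: dist_commute)
  next
    case False
    then show ?thesis using R[of x] by (cases "R \<le> x") (auto simp: dist_commute)
  qed
  then have "f ` {a<..} \<subseteq> ball l 1 \<union> f ` {b..R} \<union> ball m 1"
    by blast
  moreover have "compact (f ` {b..R})"
    using b by (intro compact_continuous_image continuous_on_subset[OF cont]) auto
  ultimately show ?thesis
    by (meson bounded_Un bounded_ball bounded_subset compact_imp_bounded)
qed

lemma continuous_on_abel_ratio:
  fixes f :: "real \<Rightarrow> real"
  assumes q: "0 \<le> q" "q < 1" and fc: "continuous_on UNIV f" and fpos: "\<And>s. 0 \<le> s \<Longrightarrow> 0 < f s"
  shows "continuous_on {0<..} (\<lambda>A. abel_integral (\<lambda>s. s * f s) q A / abel_integral f q A)"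
proof (intro continuous_on_divide ballI)
  show "continuous_on {0<..} (abel_integral (\<lambda>s. s * f s) q)"
    by (intro continuous_on_abel_integral q continuous_intros fc)
  show "continuous_on {0<..} (abel_integral f q)"
    by (rule continuous_on_abel_integral[OF q(2) fc])
  show "abel_integral f q A \<noteq> 0" if "A \<in> {0<..}" for A
  proof -
    have "0 < abel_integral f q A"
      using abel_integral_pos[OF q _ fc] fpos that by simp
    then show ?thesis by simp
  qed
qed

lemma tendsto_abel_ratio_at_right_0:
  fixes f :: "real \<Rightarrow> real"
  assumes q: "0 \<le> q" "q < 1" and fc: "continuous_on UNIV f" and fpos: "\<And>s. 0 \<le> s \<Longrightarrow> 0 < f s"
  shows "((\<lambda>A. abel_integral (\<lambda>s. s * f s) q A / abel_integral f q A) \<longlongrightarrow> 0) (at_right 0)"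
proof (rule tendsto_sandwich[OF _ _ tendsto_const tendsto_ident_at])
  have bounds: "0 \<le> abel_integral (\<lambda>s. s * f s) q A / abel_integral f q A
      \<and> abel_integral (\<lambda>s. s * f s) q A / abel_integral f q A \<le> A" if A: "0 < A" for A
  proof -
    have "0 < abel_integral f q A"
      using abel_integral_pos[OF q A fc] fpos by simp
    moreover have "0 \<le> abel_integral (\<lambda>s. s * f s) q A"
      "abel_integral (\<lambda>s. s * f s) q A \<le> A * abel_integral f q A"
      using abel_integral_moment_bounds[OF A q(2) fc] fpos by (simp_all add: less_imp_le)
    ultimately show ?thesis
      by (simp add: divide_le_eq)
  qed
  show "\<forall>\<^sub>F A in at_right 0. 0 \<le> abel_integral (\<lambda>s. s * f s) q A / abel_integral f q A"
    using eventually_at_right_less[of 0] by eventually_elim (use bounds in blast)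
  show "\<forall>\<^sub>F A in at_right 0. abel_integral (\<lambda>s. s * f s) q A / abel_integral f q A \<le> A"
    using eventually_at_right_less[of 0] by eventually_elim (use bounds in blast)
qed

lemma tendsto_abel_ratio_at_top:
  fixes f :: "real \<Rightarrow> real"
  assumes q: "0 \<le> q" "q < 1" and fc: "continuous_on UNIV f" and fnn: "\<And>s. 0 \<le> s \<Longrightarrow> 0 \<le> f s"
    and fi: "set_integrable lborel {0..} f" and sfi: "set_integrable lborel {0..} (\<lambda>s. s * f s)"
    and decay: "((\<lambda>s. s powr b * f s) \<longlongrightarrow> 0) at_top" "2 \<le> b"
    and nonzero: "(LBINT s:{0..}. f s) \<noteq> 0"
  shows "((\<lambda>A. abel_integral (\<lambda>s. s * f s) q A / abel_integral f q A)
    \<longlongrightarrow> (LBINT s:{0..}. s * f s) / (LBINT s:{0..}. f s)) at_top"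
proof -
  have ev_nn: "\<forall>\<^sub>F s in at_top. 0 \<le> f s"
    using eventually_ge_at_top[of 0] by eventually_elim (rule fnn)
  have "((\<lambda>s. s ^ 1 * f s) \<longlongrightarrow> 0) at_top" "((\<lambda>s. s ^ 2 * f s) \<longlongrightarrow> 0) at_top"
    by (rule tendsto_power_mult_zero_of_powr[OF _ ev_nn decay(1)], use decay(2) in simp)+
  then have decay1: "((\<lambda>s. s * f s) \<longlongrightarrow> 0) at_top" and decay2: "((\<lambda>s. s * (s * f s)) \<longlongrightarrow> 0) at_top"
    by (simp_all add: power2_eq_square mult.assoc)
  have "continuous_on UNIV (\<lambda>s. s * f s)"
    by (intro continuous_intros fc)
  then have "((\<lambda>A. A powr q * abel_integral (\<lambda>s. s * f s) q A) \<longlongrightarrow> (LBINT s:{0..}. s * f s)) at_top"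
    using tendsto_scaled_abel_integral[OF q _ _ sfi decay2] fnn by simp
  moreover have "((\<lambda>A. A powr q * abel_integral f q A) \<longlongrightarrow> (LBINT s:{0..}. f s)) at_top"
    by (rule tendsto_scaled_abel_integral[OF q fc fnn fi decay1])
  ultimately have "((\<lambda>A. (A powr q * abel_integral (\<lambda>s. s * f s) q A) / (A powr q * abel_integral f q A))
      \<longlongrightarrow> (LBINT s:{0..}. s * f s) / (LBINT s:{0..}. f s)) at_top"
    using nonzero by (rule tendsto_divide)
  moreover have "\<forall>\<^sub>F A in at_top. (A powr q * abel_integral (\<lambda>s. s * f s) q A) / (A powr q * abel_integral f q A)
      = abel_integral (\<lambda>s. s * f s) q A / abel_integral f q A"
    using eventually_gt_at_top[of 0] by eventually_elim simp
  ultimately show ?thesis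
    by (rule Lim_transform_eventually)
qed

lemma standing_G_has_real_derivative:
  assumes "standing_G G"
  shows "(G has_real_derivative deriv G x) (at x)"
proof -
  have "((deriv ^^ 0) G) differentiable (at x)"
    using assms unfolding standing_G_def smooth_real_def by blast
  then show ?thesis
    by (simp add: DERIV_deriv_iff_real_differentiable)
qed

lemma standing_G_continuous_deriv:
  assumes "standing_G G"
  shows "continuous_on UNIV (deriv G)"
proof -
  have "((deriv ^^ 1) G) differentiable (at x)" for x
    using assms unfolding standing_G_def smooth_real_def by blast
  then show ?thesis
    by (intro continuous_at_imp_continuous_on) (auto intro: differentiable_imp_continuous_within)
qed

lemma standing_G_set_integrable_moment:
  assumes "standing_G G"
  shows "set_integrable lborel {0..} (\<lambda>s. s * deriv G s)"
proof -
  have "integrable lborel (\<lambda>s. s * deriv G s)"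
    using assms unfolding standing_G_def by blast
  then show ?thesis
    unfolding set_integrable_def by (intro integrable_mult_indicator) simp_all
qed

lemma standing_G_set_integrable_deriv:
  assumes "standing_G G"
  shows "set_integrable lborel {0..} (deriv G)"
proof -
  have gc: "continuous_on UNIV (deriv G)"
    by (rule standing_G_continuous_deriv[OF assms])
  have "set_integrable lborel {0..1} (deriv G)"
    by (rule borel_integrable_atLeastAtMost') (rule continuous_on_subset[OF gc], auto)
  moreover have "set_integrable lborel {1..} (deriv G)"
  proof (rule set_integrable_bound)
    show "set_integrable lborel {1..} (\<lambda>s. s * deriv G s)"
      by (rule set_integrable_subset[OF standing_G_set_integrable_moment[OF assms]]) auto
    have [measurable]: "deriv G \<in> borel_measurable borel"
      by (rule borel_measurable_continuous_onI[OF gc])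
    show "set_borel_measurable lborel {1..} (deriv G)"
      unfolding set_borel_measurable_def by measurable
    have "\<bar>deriv G s\<bar> \<le> \<bar>s * deriv G s\<bar>" if "1 \<le> s" for s
      using mult_right_mono[OF that, of "\<bar>deriv G s\<bar>"] that by (simp add: abs_mult)
    then show "AE s in lborel. s \<in> {1..} \<longrightarrow> norm (deriv G s) \<le> norm (s * deriv G s)"
      by (intro AE_I2) auto
  qed
  ultimately have "set_integrable lborel ({0..1} \<union> {1..}) (deriv G)"
    by (rule set_integrable_Un) auto
  moreover have "{0..1} \<union> {1..} = {0::real..}"
    by auto
  ultimately show ?thesis
    by simp
qed

lemma standing_G_zero:
  assumes "standing_G G"
  shows "G 0 = 0"
proof -
  have "G (- 0) = - G 0"
    using assms unfolding standing_G_def by blast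
  then show ?thesis by simp
qed

lemma standing_G_tendsto_at_top:
  assumes "standing_G G"
  shows "(G \<longlongrightarrow> (LBINT s:{0..}. deriv G s)) at_top"
proof -
  have "((\<lambda>b. LBINT s:{0..b}. deriv G s) \<longlongrightarrow> (LBINT s:{0..}. deriv G s)) at_top"
    by (rule tendsto_set_lebesgue_integral_at_top[OF _ standing_G_set_integrable_deriv[OF assms]]) auto
  moreover have "\<forall>\<^sub>F b in at_top. (LBINT s:{0..b}. deriv G s) = G b"
    using eventually_ge_at_top[of 0]
  proof eventually_elim
    case (elim b)
    have "(LBINT s:{0..b}. deriv G s) = G b - G 0"
      unfolding set_lebesgue_integral_def
      by (rule integral_FTC_atLeastAtMost[OF elim])
        (auto intro!: continuous_on_subset[OF standing_G_continuous_deriv[OF assms]]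
          has_field_derivative_at_within[OF standing_G_has_real_derivative[OF assms]]
          simp flip: has_real_derivative_iff_has_vector_derivative)
    then show ?case using standing_G_zero[OF assms] by simp
  qed
  ultimately show ?thesis
    by (rule Lim_transform_eventually)
qed

lemma standing_G_integral_deriv_pos:
  assumes "standing_G G"
  shows "0 < (LBINT s:{0..}. deriv G s)"
proof -
  have D: "\<And>x. (G has_real_derivative deriv G x) (at x)" and pos: "\<And>s. 0 < deriv G s"
    using standing_G_has_real_derivative[OF assms] assms unfolding standing_G_def by auto
  have "0 = G 0"
    using standing_G_zero[OF assms] by simp
  also have "G 0 < G 1"
    using D pos by (intro DERIV_pos_imp_increasing[of 0 1 G]) auto
  also have "G 1 \<le> (LBINT s:{0..}. deriv G s)"
  proof (rule tendsto_lowerbound[OF standing_G_tendsto_at_top[OF assms]])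
    show "\<forall>\<^sub>F x in at_top. G 1 \<le> G x"
      using eventually_ge_at_top[of 1]
    proof eventually_elim
      case (elim x)
      show ?case
        by (rule deriv_nonneg_imp_mono[OF D _ elim]) (simp add: pos less_imp_le)
    qed
  qed simp
  finally show ?thesis .
qed

lemma c_p_standing_G:
  assumes "standing_G G"
  shows "c_p G = 2 * (LBINT s:{0..}. deriv G s)"
  unfolding c_p_def using tendsto_Lim[OF _ standing_G_tendsto_at_top[OF assms]] by simp

theorem lemma5p2:
  fixes p :: real and G :: "real \<Rightarrow> real"
  assumes "1 < p"
    and "standing_G G"
    and "\<exists>\<epsilon>>0. ((\<lambda>z. z powr (2 + \<epsilon>) * deriv G z) \<longlongrightarrow> 0) at_top"
  shows "continuous_on {0<..} (H_fun p G)
    \<and> bounded (H_fun p G ` {0<..})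
    \<and> ((H_fun p G) \<longlongrightarrow> 0) (at_right 0)
    \<and> ((H_fun p G) \<longlongrightarrow> 2 / c_p G * (LBINT s:{0..}. s * deriv G s)) at_top"
proof -
  define q where "q = 1 / p"
  define g where "g = deriv G"
  have q: "0 \<le> q" "q < 1"
    using assms(1) by (auto simp: q_def)
  have H: "H_fun p G = (\<lambda>A. abel_integral (\<lambda>s. s * g s) q A / abel_integral g q A)"
    by (simp add: fun_eq_iff H_fun_def abel_integral_def q_def g_def)
  have gc: "continuous_on UNIV g" and gi: "set_integrable lborel {0..} g"
    and sgi: "set_integrable lborel {0..} (\<lambda>s. s * g s)"
    unfolding g_def using assms(2) standing_G_continuous_deriv standing_G_set_integrable_deriv
      standing_G_set_integrable_moment by blast+
  have gpos: "\<And>s. 0 < g s"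
    using assms(2) unfolding g_def standing_G_def by blast
  obtain \<epsilon> where "0 < \<epsilon>" "((\<lambda>z. z powr (2 + \<epsilon>) * g z) \<longlongrightarrow> 0) at_top"
    using assms(3) unfolding g_def by blast
  then have lim_top: "(H_fun p G \<longlongrightarrow> (LBINT s:{0..}. s * g s) / (LBINT s:{0..}. g s)) at_top"
    unfolding H using standing_G_integral_deriv_pos[OF assms(2)] gpos
    by (intro tendsto_abel_ratio_at_top[OF q gc _ gi sgi]) (auto simp: g_def less_imp_le)
  have cont: "continuous_on {0<..} (H_fun p G)"
    unfolding H using continuous_on_abel_ratio[OF q gc] gpos by blast
  have lim_0: "(H_fun p G \<longlongrightarrow> 0) (at_right 0)"
    unfolding H using tendsto_abel_ratio_at_right_0[OF q gc] gpos by blast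
  have "2 / c_p G * (LBINT s:{0..}. s * deriv G s) = (LBINT s:{0..}. s * g s) / (LBINT s:{0..}. g s)"
    by (simp add: c_p_standing_G[OF assms(2)] g_def)
  then show ?thesis
    using cont lim_0 lim_top bounded_image_of_continuous_on_with_limits[OF cont lim_0 lim_top] by simp
qed

end
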